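(* Let $(A,B,\mathfrak H)$ be a P-module and let $\xi,\eta\in\mathfrak H$ be vectors contained in rays $p,q$ respectively. If $p\neq q$ then $\xi$ and $\eta$ are orthogonal. In particular, if $\xi\in\mathfrak H$ is contained in a ray $p$, then $p$ is eventually periodic and the length of a period of $p$ is at most $\dim(\mathfrak H)$.
   Context: A P-module is $(A,B,\mathfrak H)$ with $\mathfrak H$ a finite-dimensional complex Hilbert space and $A,B$ operators with $A^*A+B^*B=\mathrm{id}$. A ray is an infinite binary sequence $p=x_1x_2\cdots$; $p_n=x_1\cdots x_n$. For a finite binary word $w=x_1\cdots x_n$ and $\xi\in\mathfrak H$, $w\xi:=X_{x_n}\cdots X_{x_1}\xi$ where $X_0=A$, $X_1=B$. A non-zero vector $\xi$ is contained in the ray $p$ if $\|p_n\xi\|=\|\xi\|$ for all $n\ge1$. A ray $p$ is eventually periodic if $p=v\cdot w^\infty$ for finite words $v,w$ ($w$ a period). *)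

theory Defs
  imports "Jordan_Normal_Form.Matrix"
begin

text \<open>The finite-dimensional complex Hilbert space is modelled as \<open>\<complex>^n\<close> = \<open>carrier_vec n\<close>
  with the standard inner product; operators are \<open>n \<times> n\<close> complex matrices.\<close>

definition hinner :: "complex vec \<Rightarrow> complex vec \<Rightarrow> complex" where
  "hinner v w = (\<Sum>i<dim_vec v. v $ i * cnj (w $ i))"

definition hnorm :: "complex vec \<Rightarrow> real" where
  "hnorm v = sqrt (Re (hinner v v))"

definition adj :: "complex mat \<Rightarrow> complex mat" where
  "adj M = mat (dim_col M) (dim_row M) (\<lambda>(i,j). cnj (M $$ (j,i)))"

definition P_module :: "nat \<Rightarrow> complex mat \<Rightarrow> complex mat \<Rightarrow> bool" where
  "P_module n A B \<longleftrightarrow> A \<in> carrier_mat n n \<and> B \<in> carrier_mat n n \<and>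
     adj A * A + adj B * B = 1\<^sub>m n"

text \<open>A ray is an infinite binary sequence \<open>p :: nat \<Rightarrow> bool\<close>; \<open>p 0\<close> is \<open>x_1\<close>
  (\<open>False\<close> = 0, \<open>True\<close> = 1).\<close>

definition letter_op :: "complex mat \<Rightarrow> complex mat \<Rightarrow> bool \<Rightarrow> complex mat" where
  "letter_op A B x = (if x then B else A)"

text \<open>\<open>w \<xi> = X_{x_n} \<cdots> X_{x_1} \<xi>\<close> for \<open>w = x_1 \<cdots> x_n\<close>.\<close>
definition word_apply :: "complex mat \<Rightarrow> complex mat \<Rightarrow> bool list \<Rightarrow> complex vec \<Rightarrow> complex vec" where
  "word_apply A B w \<xi> = fold (\<lambda>x v. letter_op A B x *\<^sub>v v) w \<xi>"

definition prefix :: "(nat \<Rightarrow> bool) \<Rightarrow> nat \<Rightarrow> bool list" where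
  "prefix p n = map p [0..<n]"

definition contained_in_ray ::
  "nat \<Rightarrow> complex mat \<Rightarrow> complex mat \<Rightarrow> complex vec \<Rightarrow> (nat \<Rightarrow> bool) \<Rightarrow> bool" where
  "contained_in_ray n A B \<xi> p \<longleftrightarrow> \<xi> \<in> carrier_vec n \<and> \<xi> \<noteq> 0\<^sub>v n \<and>
     (\<forall>k\<ge>1. hnorm (word_apply A B (prefix p k) \<xi>) = hnorm \<xi>)"

definition omega_ray :: "bool list \<Rightarrow> bool list \<Rightarrow> nat \<Rightarrow> bool" where
  "omega_ray v w i = (if i < length v then v ! i else w ! ((i - length v) mod length w))"

end

theory Submission
  imports Defs "Jordan_Normal_Form.Determinant"
begin

text \<open>Summing \<open>\<langle>X\<xi>, X\<eta>\<rangle>\<close> over both letters gives back \<open>\<langle>\<xi>, \<eta>\<rangle>\<close>. If \<open>\<xi>\<close> is contained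
  in the ray \<open>p\<close>, the letter not taken by \<open>p\<close> annihilates the current vector, so \<open>\<langle>\<xi>, \<eta>\<rangle>\<close>
  is preserved along the prefixes of \<open>p\<close> for every \<open>\<eta>\<close>. At the first position where \<open>p\<close> and
  \<open>q\<close> differ, each of the two current vectors is annihilated by the letter the other one takes,
  so the inner product vanishes. For periodicity, \<open>p\<^sub>k \<xi>\<close> is contained in the \<open>k\<close>-th shift of
  \<open>p\<close>; among the \<open>n + 1\<close> vectors \<open>p\<^sub>0 \<xi>, \<dots>, p\<^sub>n \<xi>\<close> in \<open>\<complex>\<^sup>n\<close> two are not orthogonal, hence
  two shifts \<open>i < j \<le> n\<close> of \<open>p\<close> coincide and \<open>j - i\<close> is a period.\<close>

lemma hinner_self: "hinner v v = of_real (\<Sum>i<dim_vec v. (cmod (v $ i))\<^sup>2)"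
  unfolding hinner_def of_real_sum by (intro sum.cong refl) (simp only: complex_norm_square)

lemma hinner_self_eq_hnorm_sq: "hinner v v = of_real ((hnorm v)\<^sup>2)"
  unfolding hnorm_def hinner_self by (simp add: sum_nonneg)

lemma hinner_self_eq_0_iff:
  assumes "v \<in> carrier_vec n"
  shows "hinner v v = 0 \<longleftrightarrow> v = 0\<^sub>v n"
proof -
  have "hinner v v = 0 \<longleftrightarrow> (\<forall>i\<in>{..<n}. (cmod (v $ i))\<^sup>2 = 0)"
    using assms unfolding hinner_self of_real_eq_0_iff by (simp add: sum_nonneg_eq_0_iff)
  then show ?thesis
    using assms by (auto intro!: eq_vecI)
qed

lemma hinner_zero_left [simp]: "hinner (0\<^sub>v n) w = 0"
  unfolding hinner_def by simp

lemma hinner_zero_right: "v \<in> carrier_vec n \<Longrightarrow> hinner v (0\<^sub>v n) = 0"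
  unfolding hinner_def by simp

lemma hinner_add_right:
  assumes "v \<in> carrier_vec n" "x \<in> carrier_vec n" "y \<in> carrier_vec n"
  shows "hinner v (x + y) = hinner v x + hinner v y"
  using assms unfolding hinner_def by (simp add: sum.distrib algebra_simps)

lemma adj_carrier: "M \<in> carrier_mat m n \<Longrightarrow> adj M \<in> carrier_mat n m"
  unfolding adj_def by auto

lemma hinner_mult_mat_vec_left:
  assumes M: "M \<in> carrier_mat n n" and v: "v \<in> carrier_vec n" and u: "u \<in> carrier_vec n"
  shows "hinner (M *\<^sub>v v) u = hinner v (adj M *\<^sub>v u)"
proof -
  have "hinner (M *\<^sub>v v) u = (\<Sum>i<n. (\<Sum>j<n. M $$ (i,j) * v $ j) * cnj (u $ i))"
    using M v u unfolding hinner_def by (simp add: scalar_prod_def atLeast0LessThan)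
  also have "\<dots> = (\<Sum>i<n. \<Sum>j<n. v $ j * (M $$ (i,j) * cnj (u $ i)))"
    by (intro sum.cong refl) (simp add: sum_distrib_left ring_distribs mult_ac)
  also have "\<dots> = (\<Sum>j<n. \<Sum>i<n. v $ j * (M $$ (i,j) * cnj (u $ i)))"
    by (rule sum.swap)
  also have "\<dots> = (\<Sum>j<n. v $ j * cnj (\<Sum>i<n. cnj (M $$ (i,j)) * u $ i))"
    by (simp add: sum_distrib_left)
  also have "\<dots> = hinner v (adj M *\<^sub>v u)"
    using M v u unfolding hinner_def adj_def by (simp add: scalar_prod_def atLeast0LessThan)
  finally show ?thesis .
qed

lemma P_module_hinner:
  assumes P: "P_module n A B" and v: "v \<in> carrier_vec n" and w: "w \<in> carrier_vec n"
  shows "hinner (A *\<^sub>v v) (A *\<^sub>v w) + hinner (B *\<^sub>v v) (B *\<^sub>v w) = hinner v w"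
proof -
  have A: "A \<in> carrier_mat n n" and B: "B \<in> carrier_mat n n"
    and isometry: "adj A * A + adj B * B = 1\<^sub>m n"
    using P unfolding P_module_def by auto
  have aA: "adj A \<in> carrier_mat n n" and aB: "adj B \<in> carrier_mat n n"
    using A B by (simp_all add: adj_carrier)
  have "hinner (A *\<^sub>v v) (A *\<^sub>v w) + hinner (B *\<^sub>v v) (B *\<^sub>v w)
      = hinner v (adj A *\<^sub>v (A *\<^sub>v w)) + hinner v (adj B *\<^sub>v (B *\<^sub>v w))"
    using A B v w by (simp add: hinner_mult_mat_vec_left)
  also have "\<dots> = hinner v (adj A *\<^sub>v (A *\<^sub>v w) + adj B *\<^sub>v (B *\<^sub>v w))"
    using aA aB A B w by (simp add: hinner_add_right[OF v])
  also have "adj A *\<^sub>v (A *\<^sub>v w) + adj B *\<^sub>v (B *\<^sub>v w) = (adj A * A + adj B * B) *\<^sub>v w"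
    using aA aB A B w by (simp add: add_mult_distrib_mat_vec[of _ n n])
  finally show ?thesis
    using isometry w by simp
qed

lemma letter_op_carrier: "P_module n A B \<Longrightarrow> letter_op A B x \<in> carrier_mat n n"
  unfolding P_module_def letter_op_def by auto

lemma P_module_hinner_letters:
  assumes "P_module n A B" "v \<in> carrier_vec n" "w \<in> carrier_vec n"
  shows "hinner (letter_op A B x *\<^sub>v v) (letter_op A B x *\<^sub>v w)
       + hinner (letter_op A B (\<not> x) *\<^sub>v v) (letter_op A B (\<not> x) *\<^sub>v w) = hinner v w"
  using P_module_hinner[OF assms] by (cases x) (simp_all add: letter_op_def add.commute)

lemma P_module_other_letter_vanishes:
  assumes P: "P_module n A B" and v: "v \<in> carrier_vec n"
    and isometric: "hnorm (letter_op A B x *\<^sub>v v) = hnorm v"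
  shows "letter_op A B (\<not> x) *\<^sub>v v = 0\<^sub>v n"
proof -
  let ?u = "letter_op A B (\<not> x) *\<^sub>v v"
  have "hinner (letter_op A B x *\<^sub>v v) (letter_op A B x *\<^sub>v v) = hinner v v"
    using isometric by (simp add: hinner_self_eq_hnorm_sq)
  then have "hinner ?u ?u = 0"
    using P_module_hinner_letters[OF P v v, of x] by simp
  moreover have "?u \<in> carrier_vec n"
    using mult_mat_vec_carrier[OF letter_op_carrier[OF P] v] .
  ultimately show ?thesis
    using hinner_self_eq_0_iff by blast
qed

lemma word_apply_Nil [simp]: "word_apply A B [] \<xi> = \<xi>"
  by (simp add: word_apply_def)

lemma word_apply_append:
  "word_apply A B (u @ w) \<xi> = word_apply A B w (word_apply A B u \<xi>)"
  by (simp add: word_apply_def)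

lemma word_apply_carrier:
  assumes "P_module n A B" "\<xi> \<in> carrier_vec n"
  shows "word_apply A B w \<xi> \<in> carrier_vec n"
  using assms(2)
proof (induction w arbitrary: \<xi>)
  case (Cons x w)
  then show ?case
    using letter_op_carrier[OF assms(1), of x] by (simp add: word_apply_def)
qed simp

lemma prefix_0 [simp]: "prefix p 0 = []"
  by (simp add: prefix_def)

lemma prefix_Suc: "prefix p (Suc k) = prefix p k @ [p k]"
  by (simp add: prefix_def)

lemma prefix_add: "prefix p (k + j) = prefix p k @ prefix (\<lambda>i. p (k + i)) j"
  by (induction j) (simp_all add: prefix_Suc)

lemma word_apply_prefix_Suc:
  "word_apply A B (prefix p (Suc k)) \<xi> = letter_op A B (p k) *\<^sub>v word_apply A B (prefix p k) \<xi>"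
  by (simp add: word_apply_def prefix_Suc)

lemma contained_in_ray_word_apply_carrier:
  assumes "P_module n A B" "contained_in_ray n A B \<xi> p"
  shows "word_apply A B w \<xi> \<in> carrier_vec n"
  using assms word_apply_carrier unfolding contained_in_ray_def by blast

lemma contained_in_ray_hnorm:
  assumes "contained_in_ray n A B \<xi> p"
  shows "hnorm (word_apply A B (prefix p k) \<xi>) = hnorm \<xi>"
  using assms unfolding contained_in_ray_def by (cases k) auto

lemma contained_in_ray_other_letter_vanishes:
  assumes P: "P_module n A B" and c: "contained_in_ray n A B \<xi> p"
  shows "letter_op A B (\<not> p k) *\<^sub>v word_apply A B (prefix p k) \<xi> = 0\<^sub>v n"
proof (rule P_module_other_letter_vanishes[OF P])
  show "word_apply A B (prefix p k) \<xi> \<in> carrier_vec n"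
    using contained_in_ray_word_apply_carrier[OF P c] .
  show "hnorm (letter_op A B (p k) *\<^sub>v word_apply A B (prefix p k) \<xi>)
      = hnorm (word_apply A B (prefix p k) \<xi>)"
    using contained_in_ray_hnorm[OF c, of "Suc k"] contained_in_ray_hnorm[OF c, of k]
    by (simp add: word_apply_prefix_Suc)
qed

lemma contained_in_ray_hinner_prefix:
  assumes P: "P_module n A B" and c: "contained_in_ray n A B \<xi> p" and \<eta>: "\<eta> \<in> carrier_vec n"
  shows "hinner (word_apply A B (prefix p k) \<xi>) (word_apply A B (prefix p k) \<eta>) = hinner \<xi> \<eta>"
proof (induction k)
  case (Suc k)
  let ?x = "word_apply A B (prefix p k) \<xi>" and ?y = "word_apply A B (prefix p k) \<eta>"
  have "?x \<in> carrier_vec n"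
    using contained_in_ray_word_apply_carrier[OF P c] .
  moreover have "?y \<in> carrier_vec n"
    using word_apply_carrier[OF P \<eta>] .
  ultimately have "hinner (letter_op A B (p k) *\<^sub>v ?x) (letter_op A B (p k) *\<^sub>v ?y) = hinner ?x ?y"
    using P_module_hinner_letters[OF P, of ?x ?y "p k"]
    by (simp add: contained_in_ray_other_letter_vanishes[OF P c])
  then show ?case
    using Suc.IH by (simp add: word_apply_prefix_Suc)
qed simp

lemma contained_in_ray_shift:
  assumes P: "P_module n A B" and c: "contained_in_ray n A B \<xi> p"
  shows "contained_in_ray n A B (word_apply A B (prefix p k) \<xi>) (\<lambda>i. p (k + i))"
proof -
  have \<xi>: "\<xi> \<in> carrier_vec n" "\<xi> \<noteq> 0\<^sub>v n"
    using c unfolding contained_in_ray_def by auto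
  let ?x = "word_apply A B (prefix p k) \<xi>"
  have "hinner ?x ?x = hinner \<xi> \<xi>"
    using contained_in_ray_hnorm[OF c] by (simp add: hinner_self_eq_hnorm_sq)
  then have "?x \<noteq> 0\<^sub>v n"
    using \<xi> hinner_self_eq_0_iff[OF \<xi>(1)] by auto
  moreover have "hnorm (word_apply A B (prefix (\<lambda>i. p (k + i)) j) ?x) = hnorm ?x" for j
    using contained_in_ray_hnorm[OF c, of "k + j"] contained_in_ray_hnorm[OF c, of k]
    by (simp add: prefix_add word_apply_append)
  ultimately show ?thesis
    using word_apply_carrier[OF P \<xi>(1)] unfolding contained_in_ray_def by blast
qed

lemma contained_in_ray_orthogonal:
  assumes P: "P_module n A B" and c\<xi>: "contained_in_ray n A B \<xi> p"
    and c\<eta>: "contained_in_ray n A B \<eta> q" and "p \<noteq> q"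
  shows "hinner \<xi> \<eta> = 0"
proof -
  obtain m where m: "p m \<noteq> q m" and agree: "\<And>k. k < m \<Longrightarrow> p k = q k"
    using \<open>p \<noteq> q\<close> exists_least_iff[of "\<lambda>m. p m \<noteq> q m"] by auto
  have "prefix p m = prefix q m"
    using agree by (simp add: prefix_def)
  let ?x = "word_apply A B (prefix p m) \<xi>" and ?y = "word_apply A B (prefix q m) \<eta>"
  have \<eta>: "\<eta> \<in> carrier_vec n"
    using c\<eta> unfolding contained_in_ray_def by blast
  have "?x \<in> carrier_vec n"
    using contained_in_ray_word_apply_carrier[OF P c\<xi>] .
  then have Xx: "letter_op A B (p m) *\<^sub>v ?x \<in> carrier_vec n"
    using mult_mat_vec_carrier[OF letter_op_carrier[OF P]] by blast
  have "hinner \<xi> \<eta> = hinner (letter_op A B (p m) *\<^sub>v ?x) (letter_op A B (p m) *\<^sub>v ?y)"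
    using contained_in_ray_hinner_prefix[OF P c\<xi> \<eta>, of "Suc m"] \<open>prefix p m = prefix q m\<close>
    by (simp add: word_apply_prefix_Suc)
  also have "letter_op A B (p m) *\<^sub>v ?y = 0\<^sub>v n"
    using contained_in_ray_other_letter_vanishes[OF P c\<eta>, of m] m by (cases "p m") auto
  finally show ?thesis
    using hinner_zero_right[OF Xx] by simp
qed

lemma wide_mat_kernel_nonzero:
  fixes M :: "'a :: idom mat"
  assumes M: "M \<in> carrier_mat nr nc" and wide: "nr < nc"
  shows "\<exists>c \<in> carrier_vec nc. c \<noteq> 0\<^sub>v nc \<and> M *\<^sub>v c = 0\<^sub>v nr"
proof -
  \<comment> \<open>Only the first \<open>nr\<close> rows of \<open>S\<close> matter; its zero last row makes it singular.\<close>
  define S where "S = mat\<^sub>r nc nc (\<lambda>i. if i = nc - 1 then 0\<^sub>v nc else row M i)"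
  have "det S = 0"
    unfolding S_def using M wide by (intro det_row_0) auto
  then obtain c where c: "c \<in> carrier_vec nc" "c \<noteq> 0\<^sub>v nc" "S *\<^sub>v c = 0\<^sub>v nc"
    using det_0_iff_vec_prod_zero[of S nc] unfolding S_def by auto
  have "(M *\<^sub>v c) $ i = (S *\<^sub>v c) $ i" if "i < nr" for i
    using that M wide unfolding S_def by auto
  then have "M *\<^sub>v c = 0\<^sub>v nr"
    using c(3) M wide by (intro eq_vecI) auto
  with c show ?thesis by blast
qed

lemma exists_nonorthogonal_pair:
  fixes f :: "nat \<Rightarrow> complex vec"
  assumes carrier: "\<And>i. i \<le> n \<Longrightarrow> f i \<in> carrier_vec n"
    and nonzero: "\<And>i. i \<le> n \<Longrightarrow> f i \<noteq> 0\<^sub>v n"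
  shows "\<exists>i\<le>n. \<exists>j\<le>n. i \<noteq> j \<and> hinner (f i) (f j) \<noteq> 0"
proof (rule ccontr)
  assume "\<not> ?thesis"
  then have orth: "\<And>i j. i \<le> n \<Longrightarrow> j \<le> n \<Longrightarrow> i \<noteq> j \<Longrightarrow> hinner (f i) (f j) = 0"
    by blast
  have dim: "\<And>j. j < Suc n \<Longrightarrow> dim_vec (f j) = n"
    using carrier by (simp add: carrier_vecD)
  obtain c where c: "c \<in> carrier_vec (Suc n)" "c \<noteq> 0\<^sub>v (Suc n)"
    and kernel: "mat n (Suc n) (\<lambda>(i, j). f j $ i) *\<^sub>v c = 0\<^sub>v n"
    using wide_mat_kernel_nonzero[of "mat n (Suc n) (\<lambda>(i, j). f j $ i)" n "Suc n"] by auto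
  have comb: "(\<Sum>j<Suc n. f j $ i * c $ j) = 0" if "i < n" for i
    using arg_cong[OF kernel, of "\<lambda>v. v $ i"] that c(1)
    by (simp add: scalar_prod_def atLeast0LessThan)
  have "c $ k = 0" if k: "k \<le> n" for k
  proof -
    have "c $ k * hinner (f k) (f k)
        = (\<Sum>j<Suc n. if j = k then c $ k * hinner (f k) (f k) else 0)"
      using k by simp
    also have "\<dots> = (\<Sum>j<Suc n. c $ j * hinner (f j) (f k))"
      using k orth by (intro sum.cong) auto
    also have "\<dots> = (\<Sum>j<Suc n. \<Sum>i<n. c $ j * (f j $ i * cnj (f k $ i)))"
      using dim unfolding hinner_def by (intro sum.cong refl) (simp add: sum_distrib_left)
    also have "\<dots> = (\<Sum>i<n. (\<Sum>j<Suc n. f j $ i * c $ j) * cnj (f k $ i))"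
      by (subst sum.swap) (simp add: sum_distrib_left sum_distrib_right mult_ac del: sum.lessThan_Suc)
    also have "\<dots> = 0"
      using comb by simp
    finally show ?thesis
      using hinner_self_eq_0_iff[OF carrier[OF k]] nonzero[OF k] by simp
  qed
  then have "c = 0\<^sub>v (Suc n)"
    using c(1) by (intro eq_vecI) auto
  with c(2) show False ..
qed

lemma periodic_nat_mod:
  fixes f :: "nat \<Rightarrow> 'a"
  assumes "\<And>t. f (t + d) = f t"
  shows "f t = f (t mod d)"
proof -
  have "f (s + d * k) = f s" for s k
  proof (induction k)
    case (Suc k)
    have "f (s + d * Suc k) = f (s + d * k + d)"
      by (simp add: algebra_simps)
    also have "\<dots> = f s"
      using assms Suc.IH by simp
    finally show ?case .
  qed simp
  then show ?thesis
    by (metis mod_mult_div_eq)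
qed

lemma shifts_eq_imp_omega_ray:
  assumes shifts: "(\<lambda>t. p (i + t)) = (\<lambda>t. p (j + t))" and "i < j"
  shows "p = omega_ray (prefix p i) (map p [i..<j])"
proof
  fix t
  have "p (i + (t + (j - i))) = p (i + t)" for t
    using fun_cong[OF shifts, of t] \<open>i < j\<close> by (simp add: ac_simps)
  then have periodic: "p (i + t) = p (i + t mod (j - i))" for t
    by (rule periodic_nat_mod)
  show "p t = omega_ray (prefix p i) (map p [i..<j]) t"
  proof (cases "t < i")
    case False
    moreover have "i + (t - i) mod (j - i) < j"
      using \<open>i < j\<close> mod_less_divisor[of "j - i" "t - i"] by linarith
    ultimately have "omega_ray (prefix p i) (map p [i..<j]) t = p (i + (t - i) mod (j - i))"
      by (simp add: omega_ray_def prefix_def)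
    also have "\<dots> = p t"
      using periodic[of "t - i"] False by simp
    finally show ?thesis ..
  qed (simp add: omega_ray_def prefix_def)
qed

theorem lemma2p9:
  fixes n :: nat and A B :: "complex mat"
  assumes "P_module n A B"
  shows "(\<forall>\<xi> \<eta> p q. contained_in_ray n A B \<xi> p \<and> contained_in_ray n A B \<eta> q \<and> p \<noteq> q
            \<longrightarrow> hinner \<xi> \<eta> = 0)
       \<and> (\<forall>\<xi> p. contained_in_ray n A B \<xi> p \<longrightarrow>
            (\<exists>v w. w \<noteq> [] \<and> length w \<le> n \<and> p = omega_ray v w))"
proof (intro conjI allI impI)
  fix \<xi> \<eta> p q
  assume "contained_in_ray n A B \<xi> p \<and> contained_in_ray n A B \<eta> q \<and> p \<noteq> q"
  then show "hinner \<xi> \<eta> = 0"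
    using contained_in_ray_orthogonal[OF assms] by blast
next
  fix \<xi> p
  assume c: "contained_in_ray n A B \<xi> p"
  let ?f = "\<lambda>k. word_apply A B (prefix p k) \<xi>"
  have shifted: "contained_in_ray n A B (?f k) (\<lambda>t. p (k + t))" for k
    using contained_in_ray_shift[OF assms c] .
  then obtain i j where ij: "i \<le> n" "j \<le> n" "i \<noteq> j" and "hinner (?f i) (?f j) \<noteq> 0"
    using exists_nonorthogonal_pair[of n ?f] unfolding contained_in_ray_def by blast
  then have "(\<lambda>t. p (i + t)) = (\<lambda>t. p (j + t))"
    using contained_in_ray_orthogonal[OF assms shifted shifted] by blast
  then have "p = omega_ray (prefix p (min i j)) (map p [min i j..<max i j])"
    using ij by (intro shifts_eq_imp_omega_ray) (auto simp: min_def max_def)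
  then show "\<exists>v w. w \<noteq> [] \<and> length w \<le> n \<and> p = omega_ray v w"
    using ij by (intro exI conjI) (auto simp: min_def max_def)
qed

end
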